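(* Let $H$ be a weak Hopf algebra, $A$ a symmetric partial $H$-module algebra, $B$ an algebra, $\pi\colon H\to B$ a partial representation and $\phi\colon A\to B$ an algebra morphism such that $(\phi,\pi)$ is a covariant pair. Then there exists a unique algebra morphism $\Phi\colon A\,\underline{\#}\,H\to B$ such that $\Phi\circ\pi_0=\pi$ and $\Phi\circ\phi_0=\phi$, where $\pi_0\colon H\to A\,\underline{\#}\,H$, $\pi_0(h)=1_A\,\underline{\#}\,h$, and $\phi_0\colon A\to A\,\underline{\#}\,H$, $\phi_0(a)=a\,\underline{\#}\,1_H$.
   Context: All algebras are associative and unital over a field $\Bbbk$; Sweedler notation $\Delta(h)=h_1\otimes h_2$, $\Delta(1_H)=1_1\otimes1_2$. A weak Hopf algebra is $(H,m,u,\Delta,\varepsilon,S)$ with $H$ an algebra, $(H,\Delta,\varepsilon)$ a coalgebra, and for all $g,h,k$: $\Delta(kh)=\Delta(k)\Delta(h)$; $\varepsilon(kh_1)\varepsilon(h_2g)=\varepsilon(khg)=\varepsilon(kh_2)\varepsilon(h_1g)$; $(1\otimes\Delta(1))(\Delta(1)\otimes1)=\Delta^2(1)=(\Delta(1)\otimes1)(1\otimes\Delta(1))$; $h_1S(h_2)=\varepsilon_t(h)$; $S(h_1)h_2=\varepsilon_s(h)$; $S(h)=S(h_1)h_2S(h_3)$, with $\varepsilon_t(h)=\varepsilon(1_1h)1_2$, $\varepsilon_s(h)=1_1\varepsilon(h1_2)$. $H_t=\varepsilon_t(H)$, $H_s=\varepsilon_s(H)$, and the restriction $S_R\colon H_s\to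 H_t$ of $S$ is bijective. Partial representation of $H$ in $B$: a linear $\pi\colon H\to B$ with (PR1) $\pi(1_H)=1_B$; (PR2) $\pi(h)\pi(k_1)\pi(S(k_2))=\pi(hk_1)\pi(S(k_2))$; (PR3) $\pi(h)\pi(S(k_1))\pi(k_2)=\pi(hS(k_1))\pi(k_2)$; (PR4) $\pi(h_1)\pi(S(h_2))\pi(k)=\pi(h_1)\pi(S(h_2)k)$; (PR5) $\pi(S(h_1))\pi(h_2)\pi(k)=\pi(S(h_1))\pi(h_2k)$; (PR6) $\pi(h)=\pi(h_1)\pi(S(h_2))\pi(h_3)$. Partial $H$-module algebra: algebra $A$ with linear $h\otimes a\mapsto h\cdot a$ such that $h\cdot(ab)=(h_1\cdot a)(h_2\cdot b)$, $1_H\cdot a=a$, $h\cdot(k\cdot a)=(h_1\cdot1_A)((h_2k)\cdot a)$; symmetric if also $h\cdot(k\cdot a)=((h_1k)\cdot a)(h_2\cdot1_A)$. Smash product $A\#H=A\otimes_{H_t}H$ ($A$ a right $H_t$-module via $a\triangleleft z=a(S_R^{-1}(z)\cdot1_A)$, $H$ a left $H_t$-module by multiplication) with product $(a\#h)(b\#g)=a(h_1\cdot b)\#h_2g$. Partial smash product $A\,\underline{\#}\,H$: the subalgebra generated by $a\,\underline{\#}\,h:=(a\#h)(1_A\#1_H)=a(h_1\cdot1_A)\#h_2$, with unit $1_A\,\underline{\#}\,1_H$. Covariant pair: a pair $(\phi,\pi)$ with $\phi\colon A\to B$ an algebra morphism and $\pi\colon H\to B$ a partial representation such that for all $h\in H$,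 $a\in A$: (CP1) $\phi(h\cdot a)=\pi(h_1)\phi(a)\pi(S(h_2))$; (CP2) $\phi(a)\pi(S(h_1))\pi(h_2)=\pi(S(h_1))\pi(h_2)\phi(a)$. *)

theory Defs
  imports Complex_Main "HOL-Library.Poly_Mapping"
begin

text \<open>We use the sort ring + monoid_mult (no 0 /= 1 requirement), so the zero algebra is allowed.\<close>

definition k_algebra :: "('k::field \<Rightarrow> 'a::{ring,monoid_mult} \<Rightarrow> 'a) \<Rightarrow> bool" where
  "k_algebra s \<longleftrightarrow> vector_space s \<and>
     (\<forall>c x y. s c (x * y) = s c x * y \<and> s c (x * y) = x * s c y)"

definition bilin :: "('k::field \<Rightarrow> 'u::ab_group_add \<Rightarrow> 'u) \<Rightarrow> ('k \<Rightarrow> 'v::ab_group_add \<Rightarrow> 'v)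
    \<Rightarrow> ('k \<Rightarrow> 'w::ab_group_add \<Rightarrow> 'w) \<Rightarrow> ('u \<Rightarrow> 'v \<Rightarrow> 'w) \<Rightarrow> bool" where
  "bilin s1 s2 t f \<longleftrightarrow> (\<forall>y. Vector_Spaces.linear s1 t (\<lambda>x. f x y)) \<and>
                      (\<forall>x. Vector_Spaces.linear s2 t (\<lambda>y. f x y))"

definition trilin :: "('k::field \<Rightarrow> 'u::ab_group_add \<Rightarrow> 'u) \<Rightarrow> ('k \<Rightarrow> 'v::ab_group_add \<Rightarrow> 'v)
    \<Rightarrow> ('k \<Rightarrow> 'w::ab_group_add \<Rightarrow> 'w) \<Rightarrow> ('k \<Rightarrow> 'z::ab_group_add \<Rightarrow> 'z)
    \<Rightarrow> ('u \<Rightarrow> 'v \<Rightarrow> 'w \<Rightarrow> 'z) \<Rightarrow> bool" where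
  "trilin s1 s2 s3 t f \<longleftrightarrow> (\<forall>y z. Vector_Spaces.linear s1 t (\<lambda>x. f x y z)) \<and>
                         (\<forall>x z. Vector_Spaces.linear s2 t (\<lambda>y. f x y z)) \<and>
                         (\<forall>x y. Vector_Spaces.linear s3 t (\<lambda>z. f x y z))"

text \<open>An element of the tensor product U (x) V is represented by a finite formal sum
 of pure tensors, i.e. a finitely supported function T :: ('u x 'v) =>0 'k standing for
 Sum T(u,v) u (x) v.\<close>

definition sw :: "('k::field \<Rightarrow> 'w \<Rightarrow> 'w) \<Rightarrow> ('u \<times> 'v \<Rightarrow>\<^sub>0 'k) \<Rightarrow> ('u \<Rightarrow> 'v \<Rightarrow> 'w::comm_monoid_add) \<Rightarrow> 'w" where
  "sw t T f = (\<Sum>p\<in>Poly_Mapping.keys T. t (Poly_Mapping.lookup T p) (f (fst p) (snd p)))"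

text \<open>Equality in U (x)_k V of two formal sums: over a field, the linear functionals on
 U (x) V are exactly the bilinear forms, and they separate points.\<close>

definition teq :: "('k::field \<Rightarrow> 'u::ab_group_add \<Rightarrow> 'u) \<Rightarrow> ('k \<Rightarrow> 'v::ab_group_add \<Rightarrow> 'v)
   \<Rightarrow> ('u \<times> 'v \<Rightarrow>\<^sub>0 'k) \<Rightarrow> ('u \<times> 'v \<Rightarrow>\<^sub>0 'k) \<Rightarrow> bool" where
  "teq s1 s2 T T' \<longleftrightarrow> (\<forall>f. bilin s1 s2 (*) f \<longrightarrow> sw (*) T f = sw (*) T' f)"

text \<open>The comultiplication is given as a map D :: 'h \<Rightarrow> ('h x 'h =>0 'k) choosing, for each h,
 a formal sum representing Delta(h) = h_1 (x) h_2.  Every identity in H (x) H (resp. H (x) H (x) H)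
 is stated by pairing with all k-valued bilinear (resp. trilinear) forms.\<close>

definition eps_t :: "('h::{ring,monoid_mult} \<Rightarrow> 'h \<times> 'h \<Rightarrow>\<^sub>0 'k::field) \<Rightarrow> ('h \<Rightarrow> 'k)
     \<Rightarrow> ('k \<Rightarrow> 'h \<Rightarrow> 'h) \<Rightarrow> 'h \<Rightarrow> 'h" where
  "eps_t D eps sH h = sw sH (D 1) (\<lambda>x y. sH (eps (x * h)) y)"

definition eps_s :: "('h::{ring,monoid_mult} \<Rightarrow> 'h \<times> 'h \<Rightarrow>\<^sub>0 'k::field) \<Rightarrow> ('h \<Rightarrow> 'k)
     \<Rightarrow> ('k \<Rightarrow> 'h \<Rightarrow> 'h) \<Rightarrow> 'h \<Rightarrow> 'h" where
  "eps_s D eps sH h = sw sH (D 1) (\<lambda>x y. sH (eps (h * y)) x)"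

definition weak_hopf :: "('k::field \<Rightarrow> 'h::{ring,monoid_mult} \<Rightarrow> 'h) \<Rightarrow> ('h \<Rightarrow> 'h \<times> 'h \<Rightarrow>\<^sub>0 'k)
     \<Rightarrow> ('h \<Rightarrow> 'k) \<Rightarrow> ('h \<Rightarrow> 'h) \<Rightarrow> bool" where
  "weak_hopf sH D eps S \<longleftrightarrow>
     k_algebra sH \<and>
     \<comment> \<open>\<Delta>, \<epsilon>, S are linear\<close>
     (\<forall>f. bilin sH sH (*) f \<longrightarrow> Vector_Spaces.linear sH (*) (\<lambda>h. sw (*) (D h) f)) \<and>
     Vector_Spaces.linear sH (*) eps \<and>
     Vector_Spaces.linear sH sH S \<and>
     \<comment> \<open>coassociativity\<close>
     (\<forall>f h. trilin sH sH sH (*) f \<longrightarrow>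
        sw (*) (D h) (\<lambda>x y. sw (*) (D x) (\<lambda>u v. f u v y)) =
        sw (*) (D h) (\<lambda>x y. sw (*) (D y) (\<lambda>u v. f x u v))) \<and>
     \<comment> \<open>counit\<close>
     (\<forall>h. sw sH (D h) (\<lambda>x y. sH (eps x) y) = h \<and> sw sH (D h) (\<lambda>x y. sH (eps y) x) = h) \<and>
     \<comment> \<open>\<Delta>(kh) = \<Delta>(k)\<Delta>(h)\<close>
     (\<forall>f k h. bilin sH sH (*) f \<longrightarrow>
        sw (*) (D (k * h)) f = sw (*) (D k) (\<lambda>x y. sw (*) (D h) (\<lambda>u v. f (x * u) (y * v)))) \<and>
     \<comment> \<open>weak multiplicativity of the counit\<close>
     (\<forall>k h g. sw (*) (D h) (\<lambda>x y. eps (k * x) * eps (y * g)) = eps (k * h * g) \<and>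
              eps (k * h * g) = sw (*) (D h) (\<lambda>x y. eps (k * y) * eps (x * g))) \<and>
     \<comment> \<open>weak comultiplicativity of the unit\<close>
     (\<forall>f. trilin sH sH sH (*) f \<longrightarrow>
        sw (*) (D 1) (\<lambda>x y. sw (*) (D 1) (\<lambda>u v. f x (u * y) v)) =
          sw (*) (D 1) (\<lambda>x y. sw (*) (D x) (\<lambda>u v. f u v y)) \<and>
        sw (*) (D 1) (\<lambda>x y. sw (*) (D x) (\<lambda>u v. f u v y)) =
          sw (*) (D 1) (\<lambda>x y. sw (*) (D 1) (\<lambda>u v. f x (y * u) v))) \<and>
     \<comment> \<open>antipode axioms\<close>
     (\<forall>h. sw sH (D h) (\<lambda>x y. x * S y) = eps_t D eps sH h) \<and>
     (\<forall>h. sw sH (D h) (\<lambda>x y. S x * y) = eps_s D eps sH h) \<and>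
     (\<forall>h. S h = sw sH (D h) (\<lambda>x y. sw sH (D y) (\<lambda>u v. S x * u * S v)))"

definition Ht :: "('h::{ring,monoid_mult} \<Rightarrow> 'h \<times> 'h \<Rightarrow>\<^sub>0 'k::field) \<Rightarrow> ('h \<Rightarrow> 'k)
     \<Rightarrow> ('k \<Rightarrow> 'h \<Rightarrow> 'h) \<Rightarrow> 'h set" where
  "Ht D eps sH = range (eps_t D eps sH)"

definition Hs :: "('h::{ring,monoid_mult} \<Rightarrow> 'h \<times> 'h \<Rightarrow>\<^sub>0 'k::field) \<Rightarrow> ('h \<Rightarrow> 'k)
     \<Rightarrow> ('k \<Rightarrow> 'h \<Rightarrow> 'h) \<Rightarrow> 'h set" where
  "Hs D eps sH = range (eps_s D eps sH)"

definition SR_inv :: "('h::{ring,monoid_mult} \<Rightarrow> 'h \<times> 'h \<Rightarrow>\<^sub>0 'k::field) \<Rightarrow> ('h \<Rightarrow> 'k)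
     \<Rightarrow> ('k \<Rightarrow> 'h \<Rightarrow> 'h) \<Rightarrow> ('h \<Rightarrow> 'h) \<Rightarrow> 'h \<Rightarrow> 'h" where
  "SR_inv D eps sH S = inv_into (Hs D eps sH) S"

definition partial_rep :: "('k::field \<Rightarrow> 'h::{ring,monoid_mult} \<Rightarrow> 'h) \<Rightarrow> ('h \<Rightarrow> 'h \<times> 'h \<Rightarrow>\<^sub>0 'k)
     \<Rightarrow> ('h \<Rightarrow> 'h) \<Rightarrow> ('k \<Rightarrow> 'b::{ring,monoid_mult} \<Rightarrow> 'b) \<Rightarrow> ('h \<Rightarrow> 'b) \<Rightarrow> bool" where
  "partial_rep sH D S sB \<pi> \<longleftrightarrow>
     Vector_Spaces.linear sH sB \<pi> \<and>
     \<pi> 1 = 1 \<and>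
     (\<forall>h k. sw sB (D k) (\<lambda>x y. \<pi> h * \<pi> x * \<pi> (S y)) = sw sB (D k) (\<lambda>x y. \<pi> (h * x) * \<pi> (S y))) \<and>
     (\<forall>h k. sw sB (D k) (\<lambda>x y. \<pi> h * \<pi> (S x) * \<pi> y) = sw sB (D k) (\<lambda>x y. \<pi> (h * S x) * \<pi> y)) \<and>
     (\<forall>h k. sw sB (D h) (\<lambda>x y. \<pi> x * \<pi> (S y) * \<pi> k) = sw sB (D h) (\<lambda>x y. \<pi> x * \<pi> (S y * k))) \<and>
     (\<forall>h k. sw sB (D h) (\<lambda>x y. \<pi> (S x) * \<pi> y * \<pi> k) = sw sB (D h) (\<lambda>x y. \<pi> (S x) * \<pi> (y * k))) \<and>
     (\<forall>h. \<pi> h = sw sB (D h) (\<lambda>x y. sw sB (D y) (\<lambda>u v. \<pi> x * \<pi> (S u) * \<pi> v)))"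

definition partial_module_algebra :: "('k::field \<Rightarrow> 'h::{ring,monoid_mult} \<Rightarrow> 'h) \<Rightarrow> ('h \<Rightarrow> 'h \<times> 'h \<Rightarrow>\<^sub>0 'k)
     \<Rightarrow> ('k \<Rightarrow> 'a::{ring,monoid_mult} \<Rightarrow> 'a) \<Rightarrow> ('h \<Rightarrow> 'a \<Rightarrow> 'a) \<Rightarrow> bool" where
  "partial_module_algebra sH D sA act \<longleftrightarrow>
     k_algebra sA \<and>
     bilin sH sA sA act \<and>
     (\<forall>h a b. act h (a * b) = sw sA (D h) (\<lambda>x y. act x a * act y b)) \<and>
     (\<forall>a. act 1 a = a) \<and>
     (\<forall>h k a. act h (act k a) = sw sA (D h) (\<lambda>x y. act x 1 * act (y * k) a))"

definition symmetric_partial_module_algebra :: "('k::field \<Rightarrow> 'h::{ring,monoid_mult} \<Rightarrow> 'h)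
     \<Rightarrow> ('h \<Rightarrow> 'h \<times> 'h \<Rightarrow>\<^sub>0 'k) \<Rightarrow> ('k \<Rightarrow> 'a::{ring,monoid_mult} \<Rightarrow> 'a) \<Rightarrow> ('h \<Rightarrow> 'a \<Rightarrow> 'a) \<Rightarrow> bool" where
  "symmetric_partial_module_algebra sH D sA act \<longleftrightarrow>
     partial_module_algebra sH D sA act \<and>
     (\<forall>h k a. act h (act k a) = sw sA (D h) (\<lambda>x y. act (x * k) a * act y 1))"

definition alg_hom :: "('k::field \<Rightarrow> 'a::{ring,monoid_mult} \<Rightarrow> 'a) \<Rightarrow> ('k \<Rightarrow> 'b::{ring,monoid_mult} \<Rightarrow> 'b)
     \<Rightarrow> ('a \<Rightarrow> 'b) \<Rightarrow> bool" where
  "alg_hom sA sB f \<longleftrightarrow> Vector_Spaces.linear sA sB f \<and> f 1 = 1 \<and> (\<forall>a b. f (a * b) = f a * f b)"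

definition covariant_pair :: "('k::field \<Rightarrow> 'h::{ring,monoid_mult} \<Rightarrow> 'h) \<Rightarrow> ('h \<Rightarrow> 'h \<times> 'h \<Rightarrow>\<^sub>0 'k)
     \<Rightarrow> ('h \<Rightarrow> 'h) \<Rightarrow> ('k \<Rightarrow> 'a::{ring,monoid_mult} \<Rightarrow> 'a) \<Rightarrow> ('h \<Rightarrow> 'a \<Rightarrow> 'a)
     \<Rightarrow> ('k \<Rightarrow> 'b::{ring,monoid_mult} \<Rightarrow> 'b) \<Rightarrow> ('a \<Rightarrow> 'b) \<Rightarrow> ('h \<Rightarrow> 'b) \<Rightarrow> bool" where
  "covariant_pair sH D S sA act sB \<phi> \<pi> \<longleftrightarrow>
     alg_hom sA sB \<phi> \<and> partial_rep sH D S sB \<pi> \<and>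
     (\<forall>h a. \<phi> (act h a) = sw sB (D h) (\<lambda>x y. \<pi> x * \<phi> a * \<pi> (S y))) \<and>
     (\<forall>h a. \<phi> a * sw sB (D h) (\<lambda>x y. \<pi> (S x) * \<pi> y) = sw sB (D h) (\<lambda>x y. \<pi> (S x) * \<pi> y) * \<phi> a)"

text \<open>Elements of A # H are represented by formal sums X :: ('a x 'h) =>0 'k, standing for
 Sum X(a,h) a # h.  Two representatives are equal in A (x)_{H_t} H iff they agree on all
 k-valued bilinear forms on A x H that are H_t-balanced, i.e. beta(a <| z, h) = beta(a, z h)
 for z in H_t, where a <| z = a (S_R^{-1}(z) . 1_A).\<close>

definition ract :: "('h::{ring,monoid_mult} \<Rightarrow> 'h \<times> 'h \<Rightarrow>\<^sub>0 'k::field) \<Rightarrow> ('h \<Rightarrow> 'k)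
     \<Rightarrow> ('k \<Rightarrow> 'h \<Rightarrow> 'h) \<Rightarrow> ('h \<Rightarrow> 'h) \<Rightarrow> ('h \<Rightarrow> 'a::{ring,monoid_mult} \<Rightarrow> 'a) \<Rightarrow> 'a \<Rightarrow> 'h \<Rightarrow> 'a" where
  "ract D eps sH S act a z = a * act (SR_inv D eps sH S z) 1"

definition smash_eq :: "('k::field \<Rightarrow> 'h::{ring,monoid_mult} \<Rightarrow> 'h) \<Rightarrow> ('h \<Rightarrow> 'h \<times> 'h \<Rightarrow>\<^sub>0 'k)
     \<Rightarrow> ('h \<Rightarrow> 'k) \<Rightarrow> ('h \<Rightarrow> 'h) \<Rightarrow> ('k \<Rightarrow> 'a::{ring,monoid_mult} \<Rightarrow> 'a) \<Rightarrow> ('h \<Rightarrow> 'a \<Rightarrow> 'a)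
     \<Rightarrow> ('a \<times> 'h \<Rightarrow>\<^sub>0 'k) \<Rightarrow> ('a \<times> 'h \<Rightarrow>\<^sub>0 'k) \<Rightarrow> bool" where
  "smash_eq sH D eps S sA act X Y \<longleftrightarrow>
     (\<forall>f. bilin sA sH (*) f \<longrightarrow>
          (\<forall>a z h. z \<in> Ht D eps sH \<longrightarrow> f (ract D eps sH S act a z) h = f a (z * h)) \<longrightarrow>
          sw (*) X f = sw (*) Y f)"

text \<open>Pure tensor a # h, scalar multiple, and product (a # h)(b # g) = a (h_1 . b) # h_2 g.\<close>

definition stens :: "'a \<Rightarrow> 'h \<Rightarrow> ('a \<times> 'h \<Rightarrow>\<^sub>0 'k::field)" where
  "stens a h = Poly_Mapping.single (a, h) 1"

definition sscale :: "'k::field \<Rightarrow> ('a \<times> 'h \<Rightarrow>\<^sub>0 'k) \<Rightarrow> ('a \<times> 'h \<Rightarrow>\<^sub>0 'k)" where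
  "sscale c X = (\<Sum>p\<in>Poly_Mapping.keys X. Poly_Mapping.single p (c * Poly_Mapping.lookup X p))"

definition smult :: "('h::{ring,monoid_mult} \<Rightarrow> 'h \<times> 'h \<Rightarrow>\<^sub>0 'k::field) \<Rightarrow> ('h \<Rightarrow> 'a::{ring,monoid_mult} \<Rightarrow> 'a)
     \<Rightarrow> ('a \<times> 'h \<Rightarrow>\<^sub>0 'k) \<Rightarrow> ('a \<times> 'h \<Rightarrow>\<^sub>0 'k) \<Rightarrow> ('a \<times> 'h \<Rightarrow>\<^sub>0 'k)" where
  "smult D act X Y =
     (\<Sum>p\<in>Poly_Mapping.keys X. \<Sum>q\<in>Poly_Mapping.keys Y. \<Sum>r\<in>Poly_Mapping.keys (D (snd p)).
        Poly_Mapping.single (fst p * act (fst r) (fst q), snd r * snd q)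
          (Poly_Mapping.lookup X p * Poly_Mapping.lookup Y q * Poly_Mapping.lookup (D (snd p)) r))"

definition pstens :: "('h::{ring,monoid_mult} \<Rightarrow> 'h \<times> 'h \<Rightarrow>\<^sub>0 'k::field) \<Rightarrow> ('h \<Rightarrow> 'a::{ring,monoid_mult} \<Rightarrow> 'a)
     \<Rightarrow> 'a \<Rightarrow> 'h \<Rightarrow> ('a \<times> 'h \<Rightarrow>\<^sub>0 'k)" where
  "pstens D act a h = smult D act (stens a h) (stens 1 1)"

text \<open>Representatives of elements of the partial smash product: the subalgebra of A # H
 generated by all a #_ h (closed under sums, scalars, products and equality in A # H).\<close>
inductive_set psmash :: "('k::field \<Rightarrow> 'h::{ring,monoid_mult} \<Rightarrow> 'h) \<Rightarrow> ('h \<Rightarrow> 'h \<times> 'h \<Rightarrow>\<^sub>0 'k)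
     \<Rightarrow> ('h \<Rightarrow> 'k) \<Rightarrow> ('h \<Rightarrow> 'h) \<Rightarrow> ('k \<Rightarrow> 'a::{ring,monoid_mult} \<Rightarrow> 'a) \<Rightarrow> ('h \<Rightarrow> 'a \<Rightarrow> 'a)
     \<Rightarrow> ('a \<times> 'h \<Rightarrow>\<^sub>0 'k) set"
  for sH D eps S sA act where
    gen: "pstens D act a h \<in> psmash sH D eps S sA act"
  | add: "X \<in> psmash sH D eps S sA act \<Longrightarrow> Y \<in> psmash sH D eps S sA act \<Longrightarrow>
          X + Y \<in> psmash sH D eps S sA act"
  | scale: "X \<in> psmash sH D eps S sA act \<Longrightarrow> sscale c X \<in> psmash sH D eps S sA act"
  | mult: "X \<in> psmash sH D eps S sA act \<Longrightarrow> Y \<in> psmash sH D eps S sA act \<Longrightarrow>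
          smult D act X Y \<in> psmash sH D eps S sA act"
  | eq: "X \<in> psmash sH D eps S sA act \<Longrightarrow> smash_eq sH D eps S sA act Y X \<Longrightarrow>
          Y \<in> psmash sH D eps S sA act"

text \<open>Algebra morphisms out of the partial smash product (given on representatives,
 required to be well defined on classes).\<close>
definition psmash_hom :: "('k::field \<Rightarrow> 'h::{ring,monoid_mult} \<Rightarrow> 'h) \<Rightarrow> ('h \<Rightarrow> 'h \<times> 'h \<Rightarrow>\<^sub>0 'k)
     \<Rightarrow> ('h \<Rightarrow> 'k) \<Rightarrow> ('h \<Rightarrow> 'h) \<Rightarrow> ('k \<Rightarrow> 'a::{ring,monoid_mult} \<Rightarrow> 'a) \<Rightarrow> ('h \<Rightarrow> 'a \<Rightarrow> 'a)
     \<Rightarrow> ('k \<Rightarrow> 'b::{ring,monoid_mult} \<Rightarrow> 'b) \<Rightarrow> (('a \<times> 'h \<Rightarrow>\<^sub>0 'k) \<Rightarrow> 'b) \<Rightarrow> bool" where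
  "psmash_hom sH D eps S sA act sB \<Phi> \<longleftrightarrow>
     (let P = psmash sH D eps S sA act in
       (\<forall>X\<in>P. \<forall>Y\<in>P. smash_eq sH D eps S sA act X Y \<longrightarrow> \<Phi> X = \<Phi> Y) \<and>
       (\<forall>X\<in>P. \<forall>Y\<in>P. \<Phi> (X + Y) = \<Phi> X + \<Phi> Y) \<and>
       (\<forall>c. \<forall>X\<in>P. \<Phi> (sscale c X) = sB c (\<Phi> X)) \<and>
       (\<forall>X\<in>P. \<forall>Y\<in>P. \<Phi> (smult D act X Y) = \<Phi> X * \<Phi> Y) \<and>
       \<Phi> (pstens D act 1 1) = 1)"

end

theory Submission
  imports Defs
begin

(* The morphism is Phi(a # h) = phi(a) pi(h), extended linearly to formal sums.  It is compatible
   with the H_t-balanced tensor product because S maps H_s onto H_t and, by (CP1), (PR4) and weak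
   comultiplicativity of the unit, phi(w . 1_A) pi(h) = pi(S(w) h) for w in H_s.  It is
   multiplicative because phi(a (h_1 . b)) pi(h_2 g) = phi(a) pi(h) phi(b) pi(g), which follows
   from (CP1), (CP2), (PR5), (PR6) and coassociativity.  It is unique because
   a #_ h = (a #_ 1)(1 #_ h) in A # H, so a morphism is determined by its values on the images of
   A and H. *)

section \<open>Linear algebra with explicit scalar multiplications\<close>

abbreviation "lin \<equiv> Vector_Spaces.linear"

named_theorems lin_intros

lemma vector_space_field_mult [lin_intros]: "vector_space ((*) :: 'k::field \<Rightarrow> 'k \<Rightarrow> 'k)"
  by (rule vector_space.intro) (auto simp: algebra_simps)

lemma k_algebra_field_mult [lin_intros]: "k_algebra ((*) :: 'k::field \<Rightarrow> 'k \<Rightarrow> 'k)"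
  unfolding k_algebra_def by (auto simp: vector_space_field_mult algebra_simps)

lemma k_algebra_vector_space: "k_algebra s \<Longrightarrow> vector_space s"
  unfolding k_algebra_def by metis

lemma k_algebra_scale_mult_left: "k_algebra s \<Longrightarrow> s c x * y = s c (x * y)"
  unfolding k_algebra_def by metis

lemma k_algebra_scale_mult_right: "k_algebra s \<Longrightarrow> x * s c y = s c (x * y)"
  unfolding k_algebra_def by metis

lemma vector_space_scale_scale: "vector_space t \<Longrightarrow> t c (t d x) = t (c * d) x"
  by (simp add: vector_space.vector_space_assms(3))

lemma vector_space_scale_commute: "vector_space t \<Longrightarrow> t a (t b x) = t b (t a x)"
  by (simp add: vector_space_scale_scale mult.commute)

lemma vector_space_scale_sum_right: "vector_space t \<Longrightarrow> t a (sum f A) = (\<Sum>x\<in>A. t a (f x))"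
proof -
  assume "vector_space t"
  interpret vector_space t by fact
  show ?thesis by (rule scale_sum_right)
qed

lemma lin_add: "lin s t f \<Longrightarrow> f (x + y) = f x + f y"
  by (simp add: Vector_Spaces.linear_iff)

lemma lin_scale: "lin s t f \<Longrightarrow> f (s c x) = t c (f x)"
  by (simp add: Vector_Spaces.linear_iff)

lemma lin_compose: "lin t u g \<Longrightarrow> lin s t f \<Longrightarrow> lin s u (\<lambda>x. g (f x))"
  unfolding Vector_Spaces.linear_iff by auto

lemma lin_mult_right [lin_intros]: "lin s t f \<Longrightarrow> k_algebra t \<Longrightarrow> lin s t (\<lambda>x. f x * c)"
  unfolding Vector_Spaces.linear_iff k_algebra_def by (auto simp: distrib_right)

lemma lin_mult_left [lin_intros]: "lin s t f \<Longrightarrow> k_algebra t \<Longrightarrow> lin s t (\<lambda>x. c * f x)"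
  unfolding Vector_Spaces.linear_iff k_algebra_def by (auto simp: distrib_left) metis

lemma lin_scale_by [lin_intros]: "lin s (*) c \<Longrightarrow> vector_space t \<Longrightarrow> lin s t (\<lambda>x. t (c x) v)"
  unfolding Vector_Spaces.linear_iff by (auto simp: vector_space.vector_space_assms)

lemma lin_scale_of [lin_intros]: "lin s t f \<Longrightarrow> lin s t (\<lambda>x. t c (f x))"
  unfolding Vector_Spaces.linear_iff by (auto simp: vector_space.vector_space_assms mult.commute)

declare vector_space.linear_ident [lin_intros]

lemma eq_if_linear_functionals_eq:
  assumes "vector_space s" and "\<And>l. lin s ((*) :: 'k::field \<Rightarrow> 'k \<Rightarrow> 'k) l \<Longrightarrow> l u = l v"
  shows "u = v"
proof (rule ccontr)
  assume "u \<noteq> v"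
  interpret vector_space s by fact
  interpret P: vector_space_pair s "(*) :: 'k \<Rightarrow> 'k \<Rightarrow> 'k"
    by unfold_locales (auto simp: vector_space_assms algebra_simps)
  have "independent {u - v}"
    using \<open>u \<noteq> v\<close> by (simp add: independent_insert span_empty)
  then obtain g where g: "lin s (*) g" "g (u - v) = (1::'k)"
    using P.linear_independent_extend[of "{u - v}" "\<lambda>_. 1"] by auto
  then have "g u \<noteq> g v"
    by (metis P.linear_diff diff_self zero_neq_one)
  with assms(2)[OF g(1)] show False by simp
qed

lemma bilinI [lin_intros]:
  "(\<And>y. lin s1 t (\<lambda>x. f x y)) \<Longrightarrow> (\<And>x. lin s2 t (\<lambda>y. f x y)) \<Longrightarrow> bilin s1 s2 t f"
  unfolding bilin_def by auto

lemma trilinI [lin_intros]: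
  "(\<And>y z. lin s1 t (\<lambda>x. f x y z)) \<Longrightarrow> (\<And>x z. lin s2 t (\<lambda>y. f x y z)) \<Longrightarrow>
   (\<And>x y. lin s3 t (\<lambda>z. f x y z)) \<Longrightarrow> trilin s1 s2 s3 t f"
  unfolding trilin_def by auto

lemma bilinD1: "bilin s1 s2 t f \<Longrightarrow> lin s1 t (\<lambda>x. f x y)"
  unfolding bilin_def by auto

lemma bilinD2: "bilin s1 s2 t f \<Longrightarrow> lin s2 t (\<lambda>y. f x y)"
  unfolding bilin_def by auto

lemma trilinD1: "trilin s1 s2 s3 t f \<Longrightarrow> lin s1 t (\<lambda>x. f x y z)"
  unfolding trilin_def by auto

lemma trilinD2: "trilin s1 s2 s3 t f \<Longrightarrow> lin s2 t (\<lambda>y. f x y z)"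
  unfolding trilin_def by auto

lemma trilinD3: "trilin s1 s2 s3 t f \<Longrightarrow> lin s3 t (\<lambda>z. f x y z)"
  unfolding trilin_def by auto

lemma lin_bilin_left: "bilin s1 s2 t f \<Longrightarrow> lin s s1 g \<Longrightarrow> lin s t (\<lambda>x. f (g x) y)"
  by (rule lin_compose[OF bilinD1])

lemma lin_bilin_right: "bilin s1 s2 t f \<Longrightarrow> lin s s2 g \<Longrightarrow> lin s t (\<lambda>x. f y (g x))"
  by (rule lin_compose[OF bilinD2])

lemma bilin_compose: "bilin s1 s2 t F \<Longrightarrow> lin t u l \<Longrightarrow> bilin s1 s2 u (\<lambda>x y. l (F x y))"
  by (rule bilinI; erule lin_compose; erule bilinD1 bilinD2)

lemma trilin_compose:
  "trilin s1 s2 s3 t F \<Longrightarrow> lin t u l \<Longrightarrow> trilin s1 s2 s3 u (\<lambda>x y z. l (F x y z))"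
  by (rule trilinI; erule lin_compose; erule trilinD1 trilinD2 trilinD3)

section \<open>Sweedler sums\<close>

lemma sw_cong:
  "(\<And>x y. (x, y) \<in> Poly_Mapping.keys T \<Longrightarrow> f x y = g x y) \<Longrightarrow> sw t T f = sw t T g"
  unfolding sw_def by (rule sum.cong) auto

lemma sw_linear_map: "lin s t L \<Longrightarrow> L (sw s T f) = sw t T (\<lambda>x y. L (f x y))"
proof -
  assume "lin s t L"
  interpret Vector_Spaces.linear s t L by fact
  show ?thesis unfolding sw_def by (simp add: sum scale)
qed

lemma sw_swap:
  "vector_space t \<Longrightarrow> sw t T (\<lambda>x y. sw t U (G x y)) = sw t U (\<lambda>u v. sw t T (\<lambda>x y. G x y u v))"
  unfolding sw_def
  by (simp add: vector_space_scale_sum_right sum.swap[of _ "Poly_Mapping.keys T"]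
      vector_space_scale_commute[of t "poly_mapping.lookup T _"])

lemma lin_sw [lin_intros]:
  "vector_space s \<Longrightarrow> vector_space t \<Longrightarrow> (\<And>u v. lin s t (\<lambda>x. F x u v)) \<Longrightarrow>
   lin s t (\<lambda>x. sw t T (\<lambda>u v. F x u v))"
  unfolding Vector_Spaces.linear_iff sw_def
  by (auto simp: vector_space.vector_space_assms vector_space_scale_sum_right sum.distrib mult.commute)

lemma sw_mult_left: "k_algebra s \<Longrightarrow> c * sw s T f = sw s T (\<lambda>x y. c * f x y)"
  by (rule sw_linear_map) (intro lin_intros k_algebra_vector_space)

lemma sw_mult_right: "k_algebra s \<Longrightarrow> sw s T f * c = sw s T (\<lambda>x y. f x y * c)"
  by (rule sw_linear_map) (intro lin_intros k_algebra_vector_space)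

lemma sw_scale: "vector_space s \<Longrightarrow> s c (sw s T f) = sw s T (\<lambda>x y. s c (f x y))"
  by (rule sw_linear_map) (intro lin_intros)

lemma sw_scale_by: "vector_space t \<Longrightarrow> sw t T (\<lambda>x y. t (c x y) v) = t (sw (*) T c) v"
  by (rule sym, rule sw_linear_map) (intro lin_intros)

lemma sw_scale_linear:
  "lin s t L \<Longrightarrow> sw t T (\<lambda>x y. t (c x y) (L (f x y))) = L (sw s T (\<lambda>x y. s (c x y) (f x y)))"
  by (simp add: sw_linear_map lin_scale)

lemma sw_keys_superset:
  assumes "finite K" "Poly_Mapping.keys X \<subseteq> K" "vector_space t"
  shows "sw t X f = (\<Sum>p\<in>K. t (Poly_Mapping.lookup X p) (f (fst p) (snd p)))"
  unfolding sw_def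
proof (rule sum.mono_neutral_left[OF assms(1,2)])
  show "\<forall>i\<in>K - Poly_Mapping.keys X. t (Poly_Mapping.lookup X i) (f (fst i) (snd i)) = 0"
    using assms(3) by (simp add: vector_space.scale_eq_0_iff in_keys_iff)
qed

lemma sw_add:
  assumes vs: "vector_space t"
  shows "sw t (X + Y) f = sw t X f + sw t Y f"
proof -
  let ?K = "Poly_Mapping.keys X \<union> Poly_Mapping.keys Y"
  have "Poly_Mapping.keys (X + Y) \<subseteq> ?K" by (rule keys_add)
  then show ?thesis
    by (simp add: sw_keys_superset[OF _ _ vs, of ?K] lookup_add vector_space.vector_space_assms(2)[OF vs]
        sum.distrib)
qed

lemma sw_zero: "sw t 0 f = 0"
  unfolding sw_def by simp

lemma sw_single: "vector_space t \<Longrightarrow> sw t (Poly_Mapping.single p c) f = t c (f (fst p) (snd p))"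
  unfolding sw_def by (cases "c = 0") (auto simp: vector_space.scale_eq_0_iff)

lemma sw_sum: "vector_space t \<Longrightarrow> sw t (\<Sum>i\<in>I. X i) f = (\<Sum>i\<in>I. sw t (X i) f)"
  by (induction I rule: infinite_finite_induct) (simp_all add: sw_zero sw_add)

lemma sw_sscale: "vector_space t \<Longrightarrow> sw t (sscale c X) f = t c (sw t X f)"
  unfolding sscale_def
  by (simp only: sw_sum sw_single fst_conv snd_conv)
    (simp add: sw_def vector_space_scale_sum_right vector_space_scale_scale)

lemma sw_stens: "vector_space t \<Longrightarrow> sw t (stens a h) f = f a h"
  unfolding stens_def by (simp add: sw_single vector_space.vector_space_assms(4))

lemma sw_smult:
  assumes vs: "vector_space t"
  shows "sw t (smult D act X Y) f =
     sw t X (\<lambda>a h. sw t Y (\<lambda>b g. sw t (D h) (\<lambda>x y. f (a * act x b) (y * g))))"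
  unfolding smult_def using vs
  by (simp only: sw_sum[OF vs] sw_single[OF vs] fst_conv snd_conv)
    (simp add: sw_def vector_space_scale_sum_right vector_space_scale_scale mult.assoc)

lemma sw_pstens:
  "vector_space t \<Longrightarrow> sw t (pstens D act a h) G = sw t (D h) (\<lambda>x y. G (a * act x 1) y)"
  unfolding pstens_def by (simp add: sw_smult sw_stens)

section \<open>Weak Hopf algebras\<close>

locale weak_hopf_algebra =
  fixes sH :: "'k::field \<Rightarrow> 'h::{ring,monoid_mult} \<Rightarrow> 'h"
    and D :: "'h \<Rightarrow> ('h \<times> 'h \<Rightarrow>\<^sub>0 'k)"
    and eps :: "'h \<Rightarrow> 'k"
    and S :: "'h \<Rightarrow> 'h"
  assumes weak_hopf: "weak_hopf sH D eps S"
begin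

abbreviation "et \<equiv> eps_t D eps sH"
abbreviation "es \<equiv> eps_s D eps sH"

lemma k_algebra_H [lin_intros]: "k_algebra sH"
  using weak_hopf unfolding weak_hopf_def by blast

lemma vector_space_H [lin_intros]: "vector_space sH"
  using k_algebra_H by (rule k_algebra_vector_space)

lemma lin_eps: "lin sH (*) eps"
  using weak_hopf unfolding weak_hopf_def by blast

lemma lin_S: "lin sH sH S"
  using weak_hopf unfolding weak_hopf_def by blast

lemma counit_left: "sw sH (D h) (\<lambda>x y. sH (eps x) y) = h"
  using weak_hopf unfolding weak_hopf_def by blast

lemma counit_right: "sw sH (D h) (\<lambda>x y. sH (eps y) x) = h"
  using weak_hopf unfolding weak_hopf_def by blast

lemma eps_mult: "sw (*) (D h) (\<lambda>x y. eps (k * x) * eps (y * g)) = eps (k * h * g)"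
  using weak_hopf unfolding weak_hopf_def by blast

lemma eps_mult_op: "eps (k * h * g) = sw (*) (D h) (\<lambda>x y. eps (k * y) * eps (x * g))"
  using weak_hopf unfolding weak_hopf_def by blast

lemma antipode_left: "sw sH (D h) (\<lambda>x y. x * S y) = et h"
  using weak_hopf unfolding weak_hopf_def by blast

lemma antipode_right: "sw sH (D h) (\<lambda>x y. S x * y) = es h"
  using weak_hopf unfolding weak_hopf_def by blast

lemma antipode_antipode: "S h = sw sH (D h) (\<lambda>x y. sw sH (D y) (\<lambda>u v. S x * u * S v))"
  using weak_hopf unfolding weak_hopf_def by blast

lemma lin_D_scalar: "bilin sH sH (*) f \<Longrightarrow> lin sH (*) (\<lambda>h. sw (*) (D h) f)"
  using weak_hopf unfolding weak_hopf_def by blast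

lemma coassoc_scalar:
  "trilin sH sH sH (*) f \<Longrightarrow>
   sw (*) (D h) (\<lambda>x y. sw (*) (D x) (\<lambda>u v. f u v y)) =
   sw (*) (D h) (\<lambda>x y. sw (*) (D y) (\<lambda>u v. f x u v))"
  using weak_hopf unfolding weak_hopf_def by blast

lemma D_mult_scalar:
  "bilin sH sH (*) f \<Longrightarrow>
   sw (*) (D (k * h)) f = sw (*) (D k) (\<lambda>x y. sw (*) (D h) (\<lambda>u v. f (x * u) (y * v)))"
  using weak_hopf unfolding weak_hopf_def by blast

lemma weak_comult_unit_scalar:
  "trilin sH sH sH (*) f \<Longrightarrow>
   sw (*) (D 1) (\<lambda>x y. sw (*) (D 1) (\<lambda>u v. f x (u * y) v)) =
     sw (*) (D 1) (\<lambda>x y. sw (*) (D x) (\<lambda>u v. f u v y)) \<and>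
   sw (*) (D 1) (\<lambda>x y. sw (*) (D x) (\<lambda>u v. f u v y)) =
     sw (*) (D 1) (\<lambda>x y. sw (*) (D 1) (\<lambda>u v. f x (y * u) v))"
  using weak_hopf unfolding weak_hopf_def by blast

text \<open>The axioms on \<Delta> are stated for scalar-valued forms only; separation by linear functionals
  extends them to forms with values in any vector space.\<close>

lemma lin_D:
  assumes vs: "vector_space sV" and F: "bilin sH sH sV F"
  shows "lin sH sV (\<lambda>h. sw sV (D h) F)"
proof -
  have scalar: "lin sH (*) (\<lambda>h. sw (*) (D h) (\<lambda>x y. l (F x y)))" if l: "lin sV (*) l" for l
    by (rule lin_D_scalar[OF bilin_compose[OF F l]])
  show ?thesis
    unfolding Vector_Spaces.linear_iff
  proof (intro conjI allI vector_space_H vs)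
    fix x y
    show "sw sV (D (x + y)) F = sw sV (D x) F + sw sV (D y) F"
      by (rule eq_if_linear_functionals_eq[OF vs])
        (simp add: lin_add sw_linear_map lin_add[OF scalar])
  next
    fix c x
    show "sw sV (D (sH c x)) F = sV c (sw sV (D x) F)"
      by (rule eq_if_linear_functionals_eq[OF vs])
        (simp add: lin_scale sw_linear_map lin_scale[OF scalar])
  qed
qed

lemma coassoc:
  assumes vs: "vector_space sV" and F: "trilin sH sH sH sV F"
  shows "sw sV (D h) (\<lambda>x y. sw sV (D x) (\<lambda>u v. F u v y)) =
         sw sV (D h) (\<lambda>x y. sw sV (D y) (\<lambda>u v. F x u v))"
proof (rule eq_if_linear_functionals_eq[OF vs])
  fix l :: "_ \<Rightarrow> 'k" assume l: "lin sV (*) l"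
  show "l (sw sV (D h) (\<lambda>x y. sw sV (D x) (\<lambda>u v. F u v y))) =
        l (sw sV (D h) (\<lambda>x y. sw sV (D y) (\<lambda>u v. F x u v)))"
    using coassoc_scalar[OF trilin_compose[OF F l], of h] by (simp add: sw_linear_map[OF l])
qed

lemma D_mult:
  assumes vs: "vector_space sV" and F: "bilin sH sH sV F"
  shows "sw sV (D (k * h)) F = sw sV (D k) (\<lambda>x y. sw sV (D h) (\<lambda>u v. F (x * u) (y * v)))"
proof (rule eq_if_linear_functionals_eq[OF vs])
  fix l :: "_ \<Rightarrow> 'k" assume l: "lin sV (*) l"
  show "l (sw sV (D (k * h)) F) =
        l (sw sV (D k) (\<lambda>x y. sw sV (D h) (\<lambda>u v. F (x * u) (y * v))))"
    using D_mult_scalar[OF bilin_compose[OF F l], of k h] by (simp add: sw_linear_map[OF l])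
qed

lemma weak_comult_unit_left:
  assumes vs: "vector_space sV" and F: "trilin sH sH sH sV F"
  shows "sw sV (D 1) (\<lambda>x y. sw sV (D 1) (\<lambda>u v. F x (u * y) v)) =
         sw sV (D 1) (\<lambda>x y. sw sV (D x) (\<lambda>u v. F u v y))"
proof (rule eq_if_linear_functionals_eq[OF vs])
  fix l :: "_ \<Rightarrow> 'k" assume l: "lin sV (*) l"
  show "l (sw sV (D 1) (\<lambda>x y. sw sV (D 1) (\<lambda>u v. F x (u * y) v))) =
        l (sw sV (D 1) (\<lambda>x y. sw sV (D x) (\<lambda>u v. F u v y)))"
    using conjunct1[OF weak_comult_unit_scalar[OF trilin_compose[OF F l]]]
    by (simp add: sw_linear_map[OF l])
qed

lemma weak_comult_unit_right:
  assumes vs: "vector_space sV" and F: "trilin sH sH sH sV F"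
  shows "sw sV (D 1) (\<lambda>x y. sw sV (D 1) (\<lambda>u v. F x (y * u) v)) =
         sw sV (D 1) (\<lambda>x y. sw sV (D x) (\<lambda>u v. F u v y))"
proof (rule eq_if_linear_functionals_eq[OF vs])
  fix l :: "_ \<Rightarrow> 'k" assume l: "lin sV (*) l"
  show "l (sw sV (D 1) (\<lambda>x y. sw sV (D 1) (\<lambda>u v. F x (y * u) v))) =
        l (sw sV (D 1) (\<lambda>x y. sw sV (D x) (\<lambda>u v. F u v y)))"
    using conjunct2[OF weak_comult_unit_scalar[OF trilin_compose[OF F l]], symmetric]
    by (simp add: sw_linear_map[OF l])
qed

lemma lin_compose_S [lin_intros]: "lin s sH f \<Longrightarrow> lin s sH (\<lambda>x. S (f x))"
  by (rule lin_compose[OF lin_S])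

lemma lin_compose_eps [lin_intros]: "lin s sH f \<Longrightarrow> lin s (*) (\<lambda>x. eps (f x))"
  by (rule lin_compose[OF lin_eps])

lemma lin_eps_t: "lin sH sH et"
  unfolding eps_t_def by (intro lin_intros)

lemma lin_eps_s: "lin sH sH es"
  unfolding eps_s_def by (intro lin_intros)

lemma lin_compose_eps_t [lin_intros]: "lin s sH f \<Longrightarrow> lin s sH (\<lambda>x. et (f x))"
  by (rule lin_compose[OF lin_eps_t])

lemma lin_compose_eps_s [lin_intros]: "lin s sH f \<Longrightarrow> lin s sH (\<lambda>x. es (f x))"
  by (rule lin_compose[OF lin_eps_s])

lemma eps_t_one: "et 1 = 1"
  unfolding eps_t_def using counit_left[of 1] by simp

lemma H_scale_mult_left [simp]: "sH c x * y = sH c (x * y)"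
  by (rule k_algebra_scale_mult_left[OF k_algebra_H])

lemma H_scale_mult_right [simp]: "x * sH c y = sH c (x * y)"
  by (rule k_algebra_scale_mult_right[OF k_algebra_H])

lemma eps_scale [simp]: "eps (sH c x) = c * eps x"
  by (rule lin_scale[OF lin_eps])

lemma eps_t_mult_eps_t: "et (h * et g) = et (h * g)"
proof -
  have "eps (x * (h * et g)) = eps (x * (h * g))" for x
  proof -
    have "eps (x * (h * et g)) = sw (*) (D 1) (\<lambda>u v. eps (x * h * sH (eps (u * g)) v))"
      unfolding eps_t_def mult.assoc[symmetric] by (rule sw_linear_map) (intro lin_intros)
    also have "\<dots> = sw (*) (D 1) (\<lambda>u v. eps (x * h * v) * eps (u * g))"
      by (simp add: mult.commute)
    also have "\<dots> = eps (x * h * 1 * g)"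
      by (rule eps_mult_op[symmetric])
    finally show ?thesis by (simp add: mult.assoc)
  qed
  then show ?thesis
    unfolding eps_t_def[of D eps sH "h * et g"] eps_t_def[of D eps sH "h * g"] by simp
qed

lemma eps_s_eps_s_mult: "es (es h * g) = es (h * g)"
proof -
  have "eps (es h * g * y) = eps (h * g * y)" for y
  proof -
    have "eps (es h * g * y) = sw (*) (D 1) (\<lambda>u v. eps (sH (eps (h * v)) u * (g * y)))"
      unfolding eps_s_def mult.assoc by (rule sw_linear_map) (intro lin_intros)
    also have "\<dots> = sw (*) (D 1) (\<lambda>u v. eps (h * v) * eps (u * (g * y)))"
      by simp
    also have "\<dots> = eps (h * 1 * (g * y))"
      by (rule eps_mult_op[symmetric])
    finally show ?thesis by (simp add: mult.assoc)
  qed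
  then show ?thesis
    unfolding eps_s_def[of D eps sH "es h * g"] eps_s_def[of D eps sH "h * g"] by simp
qed

lemma sw_D_eps_t:
  assumes vs: "vector_space sV" and G: "bilin sH sH sV G"
  shows "sw sV (D (et g)) G = sw sV (D 1) (\<lambda>u v. G (u * et g) v)"
proof -
  have e: "et g = sw sH (D 1) (\<lambda>x y. sH (eps (x * g)) y)"
    by (simp add: eps_t_def)
  have "sw sV (D (et g)) G = sw sV (D 1) (\<lambda>x y. sw sV (D (sH (eps (x * g)) y)) G)"
    by (subst e) (rule sw_linear_map[OF lin_D[OF vs G]])
  also have "\<dots> = sw sV (D 1) (\<lambda>x y. sw sV (D y) (\<lambda>u v. sV (eps (x * g)) (G u v)))"
    by (simp add: lin_scale[OF lin_D[OF vs G]] sw_scale[OF vs])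
  also have "\<dots> = sw sV (D 1) (\<lambda>x y. sw sV (D x) (\<lambda>u v. sV (eps (u * g)) (G v y)))"
    by (rule sym, rule coassoc[OF vs, where F="\<lambda>a b c. sV (eps (a * g)) (G b c)"])
      (intro lin_intros vs bilinD1[OF G] bilinD2[OF G])
  also have "\<dots> = sw sV (D 1) (\<lambda>x y. sw sV (D 1) (\<lambda>u v. sV (eps (x * g)) (G (u * y) v)))"
    by (rule sym, rule weak_comult_unit_left[OF vs, where F="\<lambda>a b c. sV (eps (a * g)) (G b c)"])
      (intro lin_intros vs bilinD1[OF G] bilinD2[OF G])
  also have "\<dots> = sw sV (D 1) (\<lambda>u v. sw sV (D 1) (\<lambda>x y. sV (eps (x * g)) (G (u * y) v)))"
    by (rule sw_swap[OF vs])
  also have "\<dots> = sw sV (D 1) (\<lambda>u v. G (u * et g) v)"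
  proof (rule sw_cong)
    fix u v
    have "lin sH sV (\<lambda>m. G (u * m) v)"
      by (intro lin_intros lin_bilin_left[OF G])
    from sw_scale_linear[OF this, of "D 1" "\<lambda>x y. eps (x * g)" "\<lambda>x y. y"]
    show "sw sV (D 1) (\<lambda>x y. sV (eps (x * g)) (G (u * y) v)) = G (u * et g) v"
      by (simp add: e)
  qed
  finally show ?thesis .
qed

lemma sw_D_eps_s:
  assumes vs: "vector_space sV" and G: "bilin sH sH sV G"
  shows "sw sV (D (es k)) G = sw sV (D 1) (\<lambda>u v. G u (es k * v))"
proof -
  have e: "es k = sw sH (D 1) (\<lambda>u v. sH (eps (k * v)) u)"
    by (simp add: eps_s_def)
  have "sw sV (D (es k)) G = sw sV (D 1) (\<lambda>x y. sw sV (D (sH (eps (k * y)) x)) G)"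
    by (subst e) (rule sw_linear_map[OF lin_D[OF vs G]])
  also have "\<dots> = sw sV (D 1) (\<lambda>x y. sw sV (D x) (\<lambda>u v. sV (eps (k * y)) (G u v)))"
    by (simp add: lin_scale[OF lin_D[OF vs G]] sw_scale[OF vs])
  also have "\<dots> = sw sV (D 1) (\<lambda>x y. sw sV (D 1) (\<lambda>u v. sV (eps (k * v)) (G x (u * y))))"
    by (rule sym, rule weak_comult_unit_left[OF vs, where F="\<lambda>a b c. sV (eps (k * c)) (G a b)"])
      (intro lin_intros vs bilinD1[OF G] bilinD2[OF G])
  also have "\<dots> = sw sV (D 1) (\<lambda>x y. G x (es k * y))"
  proof (rule sw_cong)
    fix x y
    have "lin sH sV (\<lambda>m. G x (m * y))"
      by (intro lin_intros lin_bilin_right[OF G])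
    from sw_scale_linear[OF this, of "D 1" "\<lambda>u v. eps (k * v)" "\<lambda>u v. u"]
    show "sw sV (D 1) (\<lambda>u v. sV (eps (k * v)) (G x (u * y))) = G x (es k * y)"
      by (simp add: e)
  qed
  finally show ?thesis .
qed

lemma sw_D_mult_eps_t:
  assumes vs: "vector_space sV" and F: "bilin sH sH sV F"
  shows "sw sV (D (h * et g)) F = sw sV (D h) (\<lambda>x y. F (x * et g) y)"
proof -
  have "sw sV (D (h * et g)) F = sw sV (D h) (\<lambda>x y. sw sV (D (et g)) (\<lambda>u v. F (x * u) (y * v)))"
    by (rule D_mult[OF vs F])
  also have "\<dots> = sw sV (D h) (\<lambda>x y. sw sV (D 1) (\<lambda>u v. F (x * (u * et g)) (y * v)))"
    by (rule sw_cong, rule sw_D_eps_t[OF vs])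
      (intro lin_intros lin_bilin_left[OF F] lin_bilin_right[OF F])
  also have "\<dots> = sw sV (D (h * 1)) (\<lambda>a b. F (a * et g) b)"
    by (rule sym, subst D_mult[OF vs])
      (auto simp: mult.assoc intro!: lin_intros lin_bilin_left[OF F] lin_bilin_right[OF F] bilinD2[OF F])
  finally show ?thesis by simp
qed

lemma sw_D_eps_s_mult:
  assumes vs: "vector_space sV" and F: "bilin sH sH sV F"
  shows "sw sV (D (es k * g)) F = sw sV (D g) (\<lambda>p q. F p (es k * q))"
proof -
  have "sw sV (D (es k * g)) F = sw sV (D (es k)) (\<lambda>x x'. sw sV (D g) (\<lambda>p q. F (x * p) (x' * q)))"
    by (rule D_mult[OF vs F])
  also have "\<dots> = sw sV (D 1) (\<lambda>u v. sw sV (D g) (\<lambda>p q. F (u * p) (es k * v * q)))"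
    by (rule sw_D_eps_s[OF vs]) (intro lin_intros vs lin_bilin_left[OF F] lin_bilin_right[OF F])
  also have "\<dots> = sw sV (D (1 * g)) (\<lambda>a b. F a (es k * b))"
    by (rule sym, subst D_mult[OF vs])
      (auto simp: mult.assoc intro!: lin_intros lin_bilin_left[OF F] lin_bilin_right[OF F] bilinD1[OF F])
  finally show ?thesis by simp
qed

lemma eps_t_mult: "et (h * g) = sw sH (D h) (\<lambda>p q. p * et g * S q)"
proof -
  have "et (h * g) = et (h * et g)"
    by (rule eps_t_mult_eps_t[symmetric])
  also have "\<dots> = sw sH (D h) (\<lambda>p q. p * et g * S q)"
    using antipode_left[of "h * et g"] sw_D_mult_eps_t[OF vector_space_H, of "\<lambda>a b. a * S b" h g]
    by (simp add: bilinI lin_intros)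
  finally show ?thesis .
qed

lemma eps_s_mult: "es (h * g) = sw sH (D g) (\<lambda>p q. S p * es h * q)"
proof -
  have "es (h * g) = es (es h * g)"
    by (rule eps_s_eps_s_mult[symmetric])
  also have "\<dots> = sw sH (D g) (\<lambda>p q. S p * es h * q)"
    using antipode_right[of "es h * g"] sw_D_eps_s_mult[OF vector_space_H, of "\<lambda>a b. S a * b" h g]
    by (simp add: bilinI lin_intros mult.assoc)
  finally show ?thesis .
qed

lemma eps_t_eps_s_commute: "et a * es b = es b * et a"
proof -
  define F where "F = (\<lambda>x m v. sH (eps (x * a) * eps (b * v)) m)"
  have F: "trilin sH sH sH sH F"
    unfolding F_def by (intro lin_intros)
  have "et a * es b = sw sH (D 1) (\<lambda>x y. sw sH (D 1) (\<lambda>u v. F x (y * u) v))"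
    unfolding eps_s_def eps_t_def F_def
    by (simp add: sw_mult_right[OF k_algebra_H] sw_mult_left[OF k_algebra_H]
        vector_space_scale_scale[OF vector_space_H] sw_scale[OF vector_space_H])
      (rule trans[OF sw_swap[OF vector_space_H]], intro sw_cong, simp add: mult.commute)
  also have "\<dots> = sw sH (D 1) (\<lambda>x y. sw sH (D 1) (\<lambda>u v. F x (u * y) v))"
    using weak_comult_unit_left[OF vector_space_H F] weak_comult_unit_right[OF vector_space_H F]
    by simp
  also have "\<dots> = es b * et a"
    unfolding eps_s_def eps_t_def F_def
    by (simp add: sw_mult_right[OF k_algebra_H] sw_mult_left[OF k_algebra_H]
        vector_space_scale_scale[OF vector_space_H] sw_scale[OF vector_space_H])
  finally show ?thesis .
qed

lemma antipode_eps_t: "sw sH (D h) (\<lambda>x y. S x * et y) = S h"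
proof -
  have "S h = sw sH (D h) (\<lambda>x y. sw sH (D y) (\<lambda>u v. S x * u * S v))"
    by (rule antipode_antipode)
  also have "\<dots> = sw sH (D h) (\<lambda>x y. S x * et y)"
    by (rule sw_cong)
      (simp add: antipode_left[symmetric] sw_mult_left[OF k_algebra_H] mult.assoc)
  finally show ?thesis by simp
qed

lemma eps_s_antipode: "sw sH (D h) (\<lambda>x y. es x * S y) = S h"
proof -
  have "sw sH (D h) (\<lambda>x y. es x * S y) =
        sw sH (D h) (\<lambda>x y. sw sH (D x) (\<lambda>a b. S a * b * S y))"
    by (rule sw_cong) (simp add: antipode_right[symmetric] sw_mult_right[OF k_algebra_H])
  also have "\<dots> = sw sH (D h) (\<lambda>x y. sw sH (D y) (\<lambda>a b. S x * a * S b))"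
    by (rule coassoc[OF vector_space_H]) (intro lin_intros)
  also have "\<dots> = S h"
    by (rule antipode_antipode[symmetric])
  finally show ?thesis .
qed

lemma eps_s_mult_expand: "sw sH (D h) (\<lambda>a b. sw sH (D g) (\<lambda>a' b'. S (a * a') * (b * b'))) = es (h * g)"
  using D_mult[OF vector_space_H, of "\<lambda>m n. S m * n" h g] antipode_right[of "h * g"]
  by (simp add: lin_intros)

lemma antipode_mult_eps_s:
  "S (h * g) = sw sH (D h) (\<lambda>x y. sw sH (D g) (\<lambda>u v. es (x * u) * S v * S y))"
proof -
  have regroup: "sw sH (D g) (\<lambda>x2 y2. sw sH (D y2) (\<lambda>p q. S (a * x2) * (b * (p * S q) * Y))) =
    sw sH (D g) (\<lambda>x2 y2. sw sH (D x2) (\<lambda>a' b'. S (a * a') * (b * (b' * S y2) * Y)))" for a b Y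
    by (rule sym, rule coassoc[OF vector_space_H,
          where F="\<lambda>a' b' c. S (a * a') * (b * (b' * S c) * Y)"]) (intro lin_intros)
  have "S (h * g) = sw sH (D (h * g)) (\<lambda>x y. S x * et y)"
    by (rule antipode_eps_t[symmetric])
  also have "\<dots> = sw sH (D h) (\<lambda>x1 y1. sw sH (D g) (\<lambda>x2 y2. S (x1 * x2) * et (y1 * y2)))"
    by (rule D_mult[OF vector_space_H]) (intro lin_intros)
  also have "\<dots> = sw sH (D h) (\<lambda>x1 y1. sw sH (D y1) (\<lambda>p q.
                    sw sH (D g) (\<lambda>x2 y2. S (x1 * x2) * (p * et y2 * S q))))"
    by (simp only: eps_t_mult sw_mult_left[OF k_algebra_H] sw_swap[OF vector_space_H, of "D g"])
  also have "\<dots> = sw sH (D h) (\<lambda>x y. sw sH (D x) (\<lambda>a b.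
                    sw sH (D g) (\<lambda>x2 y2. S (a * x2) * (b * et y2 * S y))))"
    by (rule sym, rule coassoc[OF vector_space_H,
          where F="\<lambda>a b c. sw sH (D g) (\<lambda>x2 y2. S (a * x2) * (b * et y2 * S c))"])
      (intro lin_intros)
  also have "\<dots> = sw sH (D h) (\<lambda>x y. sw sH (D x) (\<lambda>a b.
                    sw sH (D g) (\<lambda>x2 y2. sw sH (D y2) (\<lambda>p q. S (a * x2) * (b * (p * S q) * S y)))))"
    by (simp add: antipode_left[symmetric] sw_mult_left[OF k_algebra_H] sw_mult_right[OF k_algebra_H])
  also have "\<dots> = sw sH (D h) (\<lambda>x y. sw sH (D x) (\<lambda>a b.
                    sw sH (D g) (\<lambda>x2 y2. sw sH (D x2) (\<lambda>a' b'. S (a * a') * (b * (b' * S y2) * S y)))))"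
    by (simp only: regroup)
  also have "\<dots> = sw sH (D h) (\<lambda>x y. sw sH (D g) (\<lambda>x2 y2.
                    sw sH (D x) (\<lambda>a b. sw sH (D x2) (\<lambda>a' b'. S (a * a') * (b * b'))) * S y2 * S y))"
    by (simp only: sw_swap[OF vector_space_H, of "D x" "D g" for x] sw_mult_right[OF k_algebra_H] mult.assoc)
  also have "\<dots> = sw sH (D h) (\<lambda>x y. sw sH (D g) (\<lambda>u v. es (x * u) * S v * S y))"
    by (simp only: eps_s_mult_expand)
  finally show ?thesis .
qed

lemma antipode_mult: "S (h * g) = S g * S h"
proof -
  have "S (h * g) = sw sH (D h) (\<lambda>x y. sw sH (D g) (\<lambda>u v. sw sH (D u) (\<lambda>p q. S p * es x * q * S v * S y)))"
    by (simp add: antipode_mult_eps_s eps_s_mult sw_mult_right[OF k_algebra_H])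
  also have "\<dots> = sw sH (D h) (\<lambda>x y. sw sH (D g) (\<lambda>u v. sw sH (D v) (\<lambda>p q. S u * es x * p * S q * S y)))"
    by (subst coassoc[OF vector_space_H]) (intro lin_intros, rule refl)
  also have "\<dots> = sw sH (D h) (\<lambda>x y. sw sH (D g) (\<lambda>u v. S u * (es x * et v) * S y))"
    by (simp add: antipode_left[symmetric] sw_mult_left[OF k_algebra_H] sw_mult_right[OF k_algebra_H]
        mult.assoc)
  also have "\<dots> = sw sH (D h) (\<lambda>x y. sw sH (D g) (\<lambda>u v. S u * et v) * (es x * S y))"
    by (simp only: eps_t_eps_s_commute[symmetric] sw_mult_right[OF k_algebra_H])
      (simp add: mult.assoc)
  also have "\<dots> = sw sH (D g) (\<lambda>u v. S u * et v) * sw sH (D h) (\<lambda>x y. es x * S y)"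
    by (simp add: sw_mult_left[OF k_algebra_H])
  also have "\<dots> = S g * S h"
    by (simp add: antipode_eps_t eps_s_antipode)
  finally show ?thesis .
qed

lemma sw_D_one_eps_s_left:
  assumes vs: "vector_space sV" and G: "bilin sH sH sV G"
  shows "sw sV (D 1) (\<lambda>x y. G (es x) y) = sw sV (D 1) G"
proof -
  define F where "F = (\<lambda>p q r. sV (eps q) (G p r))"
  have F: "trilin sH sH sH sV F"
    unfolding F_def by (intro lin_intros vs bilinD1[OF G] bilinD2[OF G])
  have "G (es x) y = sw sV (D 1) (\<lambda>u v. sV (eps (x * v)) (G u y))" for x y
    using sw_scale_linear[OF bilinD1[OF G, of y], of "D 1" "\<lambda>u v. eps (x * v)" "\<lambda>u v. u"]
    by (simp add: eps_s_def)
  then have "sw sV (D 1) (\<lambda>x y. G (es x) y) =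
             sw sV (D 1) (\<lambda>x y. sw sV (D 1) (\<lambda>u v. sV (eps (x * v)) (G u y)))"
    by simp
  also have "\<dots> = sw sV (D 1) (\<lambda>x y. sw sV (D 1) (\<lambda>u v. F x (u * y) v))"
    unfolding F_def by (rule sw_swap[OF vs])
  also have "\<dots> = sw sV (D 1) (\<lambda>x y. sw sV (D x) (\<lambda>u v. F u v y))"
    by (rule weak_comult_unit_left[OF vs F])
  also have "\<dots> = sw sV (D 1) G"
    using sw_scale_linear[OF bilinD1[OF G], of "D _" "\<lambda>u v. eps v" "\<lambda>u v. u"]
    by (simp add: F_def counit_right)
  finally show ?thesis .
qed

lemma sw_D_one_eps_t_eps_s:
  assumes vs: "vector_space sV" and G: "bilin sH sH sV G"
  shows "sw sV (D 1) (\<lambda>x y. G (et x) (es y)) = sw sV (D 1) (\<lambda>x y. G y x)"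
proof -
  have es_right: "G b (es y) = sw sV (D 1) (\<lambda>c d. sV (eps (y * d)) (G b c))" for b y
    using sw_scale_linear[OF bilinD2[OF G, of b], of "D 1" "\<lambda>c d. eps (y * d)" "\<lambda>c d. c"]
    by (simp add: eps_s_def)
  have "G (et x) (es y) =
        sw sV (D 1) (\<lambda>a b. sw sV (D 1) (\<lambda>c d. sV (eps (a * x) * eps (y * d)) (G b c)))" for x y
  proof -
    have "G (et x) (es y) = sw sV (D 1) (\<lambda>a b. sV (eps (a * x)) (G b (es y)))"
      using sw_scale_linear[OF bilinD1[OF G, of "es y"], of "D 1" "\<lambda>a b. eps (a * x)" "\<lambda>a b. b"]
      by (simp add: eps_t_def)
    then show ?thesis
      by (simp add: es_right sw_scale[OF vs] vector_space_scale_scale[OF vs])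
  qed
  then have "sw sV (D 1) (\<lambda>x y. G (et x) (es y)) =
      sw sV (D 1) (\<lambda>x y. sw sV (D 1) (\<lambda>a b. sw sV (D 1) (\<lambda>c d. sV (eps (a * x) * eps (y * d)) (G b c))))"
    by simp
  also have "\<dots> = sw sV (D 1) (\<lambda>a b. sw sV (D 1) (\<lambda>x y.
                    sw sV (D 1) (\<lambda>c d. sV (eps (a * x) * eps (y * d)) (G b c))))"
    by (rule sw_swap[OF vs])
  also have "\<dots> = sw sV (D 1) (\<lambda>a b. sw sV (D 1) (\<lambda>c d.
                    sw sV (D 1) (\<lambda>x y. sV (eps (a * x) * eps (y * d)) (G b c))))"
    by (simp only: sw_swap[OF vs, of "D 1" "D 1" "\<lambda>x y c d. sV (eps (_ * x) * eps (y * d)) (G _ c)"])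
  also have "\<dots> = sw sV (D 1) (\<lambda>a b. sw sV (D 1) (\<lambda>c d. sV (eps (a * d)) (G b c)))"
    by (simp add: sw_scale_by[OF vs] eps_mult[of 1, simplified])
  also have "\<dots> = sw sV (D 1) (\<lambda>a b. G b (es a))"
    by (simp add: es_right)
  also have "\<dots> = sw sV (D 1) (\<lambda>a b. G b a)"
    by (rule sw_D_one_eps_s_left[OF vs, where G="\<lambda>p q. G q p"])
      (intro lin_intros bilinD1[OF G] bilinD2[OF G])
  finally show ?thesis .
qed

lemma antipode_Hs: "w \<in> Hs D eps sH \<Longrightarrow> S w = et w"
proof -
  assume "w \<in> Hs D eps sH"
  then obtain k where w: "w = es k"
    unfolding Hs_def by auto
  have "et w = sw sH (D 1) (\<lambda>u v. u * S (es k * v))"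
    unfolding antipode_left[symmetric] w
    by (rule sw_D_eps_s[OF vector_space_H]) (intro lin_intros)
  also have "\<dots> = sw sH (D 1) (\<lambda>u v. u * S v) * S w"
    by (simp add: antipode_mult sw_mult_right[OF k_algebra_H] mult.assoc w)
  also have "\<dots> = S w"
    by (simp add: antipode_left eps_t_one)
  finally show ?thesis by simp
qed

text \<open>The preimage of \<open>\<epsilon>\<^sub>t(g)\<close> is \<open>\<epsilon>(\<epsilon>\<^sub>s(1\<^sub>2) g) 1\<^sub>1\<close>.\<close>

lemma Ht_subset_antipode_Hs: "Ht D eps sH \<subseteq> S ` Hs D eps sH"
proof
  fix z assume "z \<in> Ht D eps sH"
  then obtain g where z: "z = et g"
    unfolding Ht_def by auto
  define w where "w = sw sH (D 1) (\<lambda>x y. sH (eps (es y * g)) x)"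
  have "es w = sw sH (D 1) (\<lambda>x y. sH (eps (es y * g)) (es x))"
    unfolding w_def by (simp add: sw_linear_map[OF lin_eps_s] lin_scale[OF lin_eps_s])
  also have "\<dots> = w"
    unfolding w_def
    by (rule sw_D_one_eps_s_left[OF vector_space_H, where G="\<lambda>p q. sH (eps (es q * g)) p"])
      (intro lin_intros)
  finally have w_Hs: "w \<in> Hs D eps sH"
    unfolding Hs_def by (metis rangeI)
  have "S w = et w"
    by (rule antipode_Hs[OF w_Hs])
  also have "\<dots> = sw sH (D 1) (\<lambda>x y. sH (eps (es y * g)) (et x))"
    unfolding w_def by (simp add: sw_linear_map[OF lin_eps_t] lin_scale[OF lin_eps_t])
  also have "\<dots> = sw sH (D 1) (\<lambda>x y. sH (eps (x * g)) y)"
    by (rule sw_D_one_eps_t_eps_s[OF vector_space_H, where G="\<lambda>p q. sH (eps (q * g)) p"])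
      (intro lin_intros)
  also have "\<dots> = z"
    by (simp add: z eps_t_def)
  finally show "z \<in> S ` Hs D eps sH"
    using w_Hs by blast
qed

lemma SR_inv_in_Hs: "z \<in> Ht D eps sH \<Longrightarrow> SR_inv D eps sH S z \<in> Hs D eps sH"
  unfolding SR_inv_def using Ht_subset_antipode_Hs by (blast intro: inv_into_into)

lemma antipode_SR_inv: "z \<in> Ht D eps sH \<Longrightarrow> S (SR_inv D eps sH S z) = z"
  unfolding SR_inv_def using Ht_subset_antipode_Hs by (blast intro: f_inv_into_f)

end

section \<open>Partial module algebras and the partial smash product\<close>

locale weak_hopf_partial_module = weak_hopf_algebra sH D eps S
  for sH :: "'k::field \<Rightarrow> 'h::{ring,monoid_mult} \<Rightarrow> 'h"
    and D :: "'h \<Rightarrow> ('h \<times> 'h \<Rightarrow>\<^sub>0 'k)"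
    and eps :: "'h \<Rightarrow> 'k"
    and S :: "'h \<Rightarrow> 'h" +
  fixes sA :: "'k \<Rightarrow> 'a::{ring,monoid_mult} \<Rightarrow> 'a"
    and act :: "'h \<Rightarrow> 'a \<Rightarrow> 'a"
  assumes partial_module: "partial_module_algebra sH D sA act"
begin

lemma k_algebra_A [lin_intros]: "k_algebra sA"
  using partial_module unfolding partial_module_algebra_def by blast

lemma vector_space_A [lin_intros]: "vector_space sA"
  using k_algebra_A by (rule k_algebra_vector_space)

lemma bilin_act: "bilin sH sA sA act"
  using partial_module unfolding partial_module_algebra_def by blast

lemma act_mult: "act h (a * b) = sw sA (D h) (\<lambda>x y. act x a * act y b)"
  using partial_module unfolding partial_module_algebra_def by blast

lemma act_one: "act 1 a = a"
  using partial_module unfolding partial_module_algebra_def by blast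

lemma act_act: "act h (act k a) = sw sA (D h) (\<lambda>x y. act x 1 * act (y * k) a)"
  using partial_module unfolding partial_module_algebra_def by blast

lemma lin_compose_act_left [lin_intros]: "lin s sH f \<Longrightarrow> lin s sA (\<lambda>x. act (f x) a)"
  by (rule lin_bilin_left[OF bilin_act])

lemma sw_D_one_act_unit_act:
  "lin sA t L \<Longrightarrow> sw t (D 1) (\<lambda>x y. L (act x 1 * act (y * m) b)) = L (act m b)"
  using act_act[of 1 m b] by (simp add: act_one sw_linear_map)

lemma sw_D_one_act_unit_act_act:
  assumes f: "bilin sA sH (*) f"
  shows "sw (*) (D 1) (\<lambda>x y. sw (*) (D y) (\<lambda>u v. f (act x 1 * act u (act k 1)) v)) =
         sw (*) (D 1) (\<lambda>x y. sw (*) (D 1) (\<lambda>u v. f (act x 1 * act (y * u * k) 1) v))"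
proof -
  have "sw (*) (D 1) (\<lambda>x y. sw (*) (D y) (\<lambda>u v. f (act x 1 * act u (act k 1)) v)) =
        sw (*) (D 1) (\<lambda>x y. sw (*) (D x) (\<lambda>p q. f (act p 1 * act q (act k 1)) y))"
    by (rule sym, rule coassoc[OF vector_space_field_mult,
          where F="\<lambda>p q r. f (act p 1 * act q (act k 1)) r"])
      (intro lin_intros lin_bilin_left[OF f] lin_bilin_right[OF f])
  also have "\<dots> = sw (*) (D 1) (\<lambda>x y. f (act x (act k 1)) y)"
  proof (rule sw_cong)
    fix x y
    have "f (act x (act k 1)) y = f (act x (1 * act k 1)) y"
      by simp
    then show "sw (*) (D x) (\<lambda>p q. f (act p 1 * act q (act k 1)) y) = f (act x (act k 1)) y"
      by (simp only: act_mult sw_linear_map[OF bilinD1[OF f]])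
  qed
  also have "\<dots> = sw (*) (D 1) (\<lambda>x y. sw (*) (D x) (\<lambda>p q. f (act p 1 * act (q * k) 1) y))"
    by (simp add: act_act sw_linear_map[OF bilinD1[OF f]])
  also have "\<dots> = sw (*) (D 1) (\<lambda>x y. sw (*) (D 1) (\<lambda>u v. f (act x 1 * act (y * u * k) 1) v))"
    by (rule sym, rule weak_comult_unit_right[OF vector_space_field_mult,
          where F="\<lambda>p q r. f (act p 1 * act (q * k) 1) r"])
      (intro lin_intros lin_bilin_left[OF f] lin_bilin_right[OF f])
  finally show ?thesis .
qed

lemma sw_pstens_factor:
  assumes f: "bilin sA sH (*) f"
  shows "sw (*) (smult D act (pstens D act a 1) (pstens D act 1 h)) f = sw (*) (pstens D act a h) f"
proof -
  have f': "bilin sA sH (*) (\<lambda>m n. f (a * m) (n * g))" for g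
    by (intro lin_intros lin_bilin_left[OF f] lin_bilin_right[OF f])
  have lin_in_H: "lin sH (*) (\<lambda>m. f (a * act x 1 * act (y * m) 1) n)" for x y n
    by (intro lin_intros lin_bilin_left[OF f])
  have "sw (*) (smult D act (pstens D act a 1) (pstens D act 1 h)) f =
        sw (*) (D 1) (\<lambda>x1 y1. sw (*) (D h) (\<lambda>x2 y2.
          sw (*) (D y1) (\<lambda>u v. f (a * act x1 1 * act u (act x2 1)) (v * y2))))"
    by (simp add: sw_smult[OF vector_space_field_mult] sw_pstens[OF vector_space_field_mult])
  also have "\<dots> = sw (*) (D h) (\<lambda>x2 y2. sw (*) (D 1) (\<lambda>x1 y1.
          sw (*) (D y1) (\<lambda>u v. f (a * act x1 1 * act u (act x2 1)) (v * y2))))"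
    by (rule sw_swap[OF vector_space_field_mult])
  also have "\<dots> = sw (*) (D h) (\<lambda>x2 y2. sw (*) (D 1) (\<lambda>x y.
          sw (*) (D 1) (\<lambda>u v. f (a * act x 1 * act (y * (u * x2)) 1) (v * y2))))"
    by (simp only: mult.assoc sw_D_one_act_unit_act_act[OF f'])
  also have "\<dots> = sw (*) (D 1) (\<lambda>x y. sw (*) (D h) (\<lambda>x2 y2.
          sw (*) (D 1) (\<lambda>u v. f (a * act x 1 * act (y * (u * x2)) 1) (v * y2))))"
    by (rule sw_swap[OF vector_space_field_mult])
  also have "\<dots> = sw (*) (D 1) (\<lambda>x y. sw (*) (D (1 * h)) (\<lambda>m n. f (a * act x 1 * act (y * m) 1) n))"
  proof (rule sw_cong)
    fix x y
    have "bilin sH sH (*) (\<lambda>m n. f (a * act x 1 * act (y * m) 1) n)"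
      by (intro bilinI lin_in_H lin_bilin_right[OF f] lin_intros)
    then show "sw (*) (D h) (\<lambda>x2 y2.
                 sw (*) (D 1) (\<lambda>u v. f (a * act x 1 * act (y * (u * x2)) 1) (v * y2))) =
               sw (*) (D (1 * h)) (\<lambda>m n. f (a * act x 1 * act (y * m) 1) n)"
      by (simp only: D_mult[OF vector_space_field_mult] sw_swap[OF vector_space_field_mult, of "D h"])
  qed
  also have "\<dots> = sw (*) (D h) (\<lambda>m n. sw (*) (D 1) (\<lambda>x y. f (a * (act x 1 * act (y * m) 1)) n))"
    by (simp add: sw_swap[OF vector_space_field_mult, of "D 1"] mult.assoc)
  also have "\<dots> = sw (*) (D h) (\<lambda>m n. f (a * act m 1) n)"
    by (simp only: sw_D_one_act_unit_act[OF lin_bilin_left[OF f]] lin_intros)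
  also have "\<dots> = sw (*) (pstens D act a h) f"
    by (simp add: sw_pstens[OF vector_space_field_mult])
  finally show ?thesis .
qed

lemma smash_eq_pstens_factor:
  "smash_eq sH D eps S sA act (smult D act (pstens D act a 1) (pstens D act 1 h)) (pstens D act a h)"
  unfolding smash_eq_def using sw_pstens_factor by blast

end

section \<open>The universal property of the partial smash product\<close>

locale weak_hopf_covariant_pair = weak_hopf_partial_module sH D eps S sA act
  for sH :: "'k::field \<Rightarrow> 'h::{ring,monoid_mult} \<Rightarrow> 'h"
    and D :: "'h \<Rightarrow> ('h \<times> 'h \<Rightarrow>\<^sub>0 'k)"
    and eps :: "'h \<Rightarrow> 'k"
    and S :: "'h \<Rightarrow> 'h"
    and sA :: "'k \<Rightarrow> 'a::{ring,monoid_mult} \<Rightarrow> 'a"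
    and act :: "'h \<Rightarrow> 'a \<Rightarrow> 'a" +
  fixes sB :: "'k \<Rightarrow> 'b::{ring,monoid_mult} \<Rightarrow> 'b"
    and \<phi> :: "'a \<Rightarrow> 'b"
    and \<pi> :: "'h \<Rightarrow> 'b"
  assumes k_algebra_B [lin_intros]: "k_algebra sB"
    and covariant: "covariant_pair sH D S sA act sB \<phi> \<pi>"
begin

lemma vector_space_B [lin_intros]: "vector_space sB"
  using k_algebra_B by (rule k_algebra_vector_space)

lemma lin_pi: "lin sH sB \<pi>"
  using covariant unfolding covariant_pair_def partial_rep_def by blast

lemma pi_one: "\<pi> 1 = 1"
  using covariant unfolding covariant_pair_def partial_rep_def by blast

lemma PR4: "sw sB (D h) (\<lambda>x y. \<pi> x * \<pi> (S y) * \<pi> k) = sw sB (D h) (\<lambda>x y. \<pi> x * \<pi> (S y * k))"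
  using covariant unfolding covariant_pair_def partial_rep_def by blast

lemma PR5: "sw sB (D h) (\<lambda>x y. \<pi> (S x) * \<pi> y * \<pi> k) = sw sB (D h) (\<lambda>x y. \<pi> (S x) * \<pi> (y * k))"
  using covariant unfolding covariant_pair_def partial_rep_def by blast

lemma PR6: "\<pi> h = sw sB (D h) (\<lambda>x y. sw sB (D y) (\<lambda>u v. \<pi> x * \<pi> (S u) * \<pi> v))"
  using covariant unfolding covariant_pair_def partial_rep_def by blast

lemma lin_phi: "lin sA sB \<phi>"
  using covariant unfolding covariant_pair_def alg_hom_def by blast

lemma phi_one: "\<phi> 1 = 1"
  using covariant unfolding covariant_pair_def alg_hom_def by blast

lemma phi_mult: "\<phi> (a * b) = \<phi> a * \<phi> b"
  using covariant unfolding covariant_pair_def alg_hom_def by blast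

lemma CP1: "\<phi> (act h a) = sw sB (D h) (\<lambda>x y. \<pi> x * \<phi> a * \<pi> (S y))"
  using covariant unfolding covariant_pair_def by blast

lemma CP2:
  "\<phi> a * sw sB (D h) (\<lambda>x y. \<pi> (S x) * \<pi> y) = sw sB (D h) (\<lambda>x y. \<pi> (S x) * \<pi> y) * \<phi> a"
  using covariant unfolding covariant_pair_def by blast

lemma lin_compose_pi [lin_intros]: "lin s sH f \<Longrightarrow> lin s sB (\<lambda>x. \<pi> (f x))"
  by (rule lin_compose[OF lin_pi])

lemma lin_compose_phi [lin_intros]: "lin s sA f \<Longrightarrow> lin s sB (\<lambda>x. \<phi> (f x))"
  by (rule lin_compose[OF lin_phi])

lemma B_scale_mult_left [simp]: "sB c x * y = sB c (x * y)"
  by (rule k_algebra_scale_mult_left[OF k_algebra_B])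

lemma pi_scale [simp]: "\<pi> (sH c x) = sB c (\<pi> x)"
  by (rule lin_scale[OF lin_pi])

lemma covariant_mult:
  "sw sB (D h) (\<lambda>x y. \<phi> (a * act x b) * \<pi> (y * g)) = \<phi> a * \<pi> h * \<phi> b * \<pi> g"
proof -
  have commute: "sw sB (D y) (\<lambda>u v. \<pi> x * \<phi> b * \<pi> (S u) * \<pi> (v * g)) =
                 sw sB (D y) (\<lambda>u v. \<pi> x * \<pi> (S u) * \<pi> v) * \<phi> b * \<pi> g" for x y
  proof -
    have "sw sB (D y) (\<lambda>u v. \<pi> x * \<phi> b * \<pi> (S u) * \<pi> (v * g)) =
          \<pi> x * \<phi> b * sw sB (D y) (\<lambda>u v. \<pi> (S u) * \<pi> (v * g))"
      by (simp add: sw_mult_left[OF k_algebra_B] mult.assoc)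
    also have "\<dots> = \<pi> x * \<phi> b * sw sB (D y) (\<lambda>u v. \<pi> (S u) * \<pi> v) * \<pi> g"
      by (simp add: PR5[symmetric] sw_mult_right[OF k_algebra_B] mult.assoc)
    also have "\<dots> = \<pi> x * sw sB (D y) (\<lambda>u v. \<pi> (S u) * \<pi> v) * \<phi> b * \<pi> g"
      by (simp add: CP2 mult.assoc)
    also have "\<dots> = sw sB (D y) (\<lambda>u v. \<pi> x * \<pi> (S u) * \<pi> v) * \<phi> b * \<pi> g"
      by (simp add: sw_mult_left[OF k_algebra_B] mult.assoc)
    finally show ?thesis .
  qed
  have "sw sB (D h) (\<lambda>x y. \<phi> (a * act x b) * \<pi> (y * g)) =
        \<phi> a * sw sB (D h) (\<lambda>x y. sw sB (D x) (\<lambda>u v. \<pi> u * \<phi> b * \<pi> (S v) * \<pi> (y * g)))"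
    by (simp add: phi_mult CP1 sw_mult_left[OF k_algebra_B] sw_mult_right[OF k_algebra_B] mult.assoc)
  also have "\<dots> = \<phi> a * sw sB (D h) (\<lambda>x y. sw sB (D y) (\<lambda>u v. \<pi> x * \<phi> b * \<pi> (S u) * \<pi> (v * g)))"
    by (subst coassoc[OF vector_space_B, where F="\<lambda>u v y. \<pi> u * \<phi> b * \<pi> (S v) * \<pi> (y * g)"])
      (intro lin_intros, rule refl)
  also have "\<dots> = \<phi> a * (sw sB (D h) (\<lambda>x y. sw sB (D y) (\<lambda>u v. \<pi> x * \<pi> (S u) * \<pi> v)) * \<phi> b * \<pi> g)"
    by (simp only: commute sw_mult_right[OF k_algebra_B])
  also have "\<dots> = \<phi> a * \<pi> h * \<phi> b * \<pi> g"
    by (simp only: PR6[symmetric]) (simp add: mult.assoc)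
  finally show ?thesis .
qed

lemma phi_act_Hs_unit:
  assumes "w \<in> Hs D eps sH"
  shows "\<phi> (act w 1) * \<pi> h = \<pi> (S w * h)"
proof -
  obtain k where w: "w = es k"
    using assms unfolding Hs_def by auto
  have "\<phi> (act w 1) = sw sB (D 1) (\<lambda>x y. sB (eps (k * y)) (\<phi> (act x 1)))"
    using sw_scale_linear[of sH sB "\<lambda>m. \<phi> (act m 1)" "D 1" "\<lambda>x y. eps (k * y)" "\<lambda>x y. x"]
    by (simp add: w eps_s_def lin_intros)
  then have "\<phi> (act w 1) * \<pi> h =
             sw sB (D 1) (\<lambda>x y. sB (eps (k * y)) (sw sB (D x) (\<lambda>u v. \<pi> u * \<pi> (S v) * \<pi> h)))"
    by (simp add: CP1 phi_one sw_mult_right[OF k_algebra_B])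
  also have "\<dots> = sw sB (D 1) (\<lambda>x y. sw sB (D x) (\<lambda>u v. sB (eps (k * y)) (\<pi> u * \<pi> (S v * h))))"
    by (simp add: PR4 sw_scale[OF vector_space_B])
  also have "\<dots> = sw sB (D 1) (\<lambda>x y. sw sB (D 1) (\<lambda>u v. sB (eps (k * v)) (\<pi> x * \<pi> (S (u * y) * h))))"
    by (rule sym, rule weak_comult_unit_left[OF vector_space_B,
          where F="\<lambda>p q r. sB (eps (k * r)) (\<pi> p * \<pi> (S q * h))"])
      (intro lin_intros)
  also have "\<dots> = sw sB (D 1) (\<lambda>x y. \<pi> x * \<pi> (S (w * y) * h))"
  proof (rule sw_cong)
    fix x y
    have "lin sH sB (\<lambda>m. \<pi> x * \<pi> (S (m * y) * h))"
      by (intro lin_intros)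
    from sw_scale_linear[OF this, of "D 1" "\<lambda>u v. eps (k * v)" "\<lambda>u v. u"]
    show "sw sB (D 1) (\<lambda>u v. sB (eps (k * v)) (\<pi> x * \<pi> (S (u * y) * h))) = \<pi> x * \<pi> (S (w * y) * h)"
      by (simp add: w eps_s_def)
  qed
  also have "\<dots> = sw sB (D 1) (\<lambda>x y. \<pi> x * \<pi> (S y * (S w * h)))"
    by (simp add: antipode_mult mult.assoc)
  also have "\<dots> = sw sB (D 1) (\<lambda>x y. \<pi> x * \<pi> (S y)) * \<pi> (S w * h)"
    by (simp add: PR4[symmetric] sw_mult_right[OF k_algebra_B])
  also have "\<dots> = \<pi> (S w * h)"
    using CP1[of 1 1] by (simp add: act_one phi_one)
  finally show ?thesis .
qed

definition induced_hom :: "('a \<times> 'h \<Rightarrow>\<^sub>0 'k) \<Rightarrow> 'b" where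
  "induced_hom X = sw sB X (\<lambda>a h. \<phi> a * \<pi> h)"

lemma induced_hom_add: "induced_hom (X + Y) = induced_hom X + induced_hom Y"
  unfolding induced_hom_def by (rule sw_add[OF vector_space_B])

lemma induced_hom_sscale: "induced_hom (sscale c X) = sB c (induced_hom X)"
  unfolding induced_hom_def by (rule sw_sscale[OF vector_space_B])

lemma induced_hom_smult: "induced_hom (smult D act X Y) = induced_hom X * induced_hom Y"
proof -
  have "induced_hom (smult D act X Y) =
        sw sB X (\<lambda>a h. sw sB Y (\<lambda>b g. \<phi> a * \<pi> h * \<phi> b * \<pi> g))"
    unfolding induced_hom_def by (simp add: sw_smult[OF vector_space_B] covariant_mult)
  also have "\<dots> = sw sB X (\<lambda>a h. \<phi> a * \<pi> h * sw sB Y (\<lambda>b g. \<phi> b * \<pi> g))"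
    by (simp only: sw_mult_left[OF k_algebra_B] mult.assoc)
  also have "\<dots> = induced_hom X * induced_hom Y"
    unfolding induced_hom_def by (rule sw_mult_right[OF k_algebra_B, symmetric])
  finally show ?thesis .
qed

lemma induced_hom_pstens: "induced_hom (pstens D act a h) = \<phi> a * \<pi> h"
  unfolding induced_hom_def using covariant_mult[of h a 1 1]
  by (simp add: sw_pstens[OF vector_space_B] phi_one pi_one)

lemma induced_hom_smash_eq:
  assumes "smash_eq sH D eps S sA act X Y"
  shows "induced_hom X = induced_hom Y"
  unfolding induced_hom_def
proof (rule eq_if_linear_functionals_eq[OF vector_space_B])
  fix l :: "'b \<Rightarrow> 'k" assume l: "lin sB (*) l"
  have "bilin sA sH (*) (\<lambda>a h. l (\<phi> a * \<pi> h))"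
    by (intro lin_intros lin_compose[OF l])
  moreover have "l (\<phi> (ract D eps sH S act a z) * \<pi> h) = l (\<phi> a * \<pi> (z * h))"
    if z: "z \<in> Ht D eps sH" for a z h
  proof -
    have "\<phi> (ract D eps sH S act a z) * \<pi> h = \<phi> a * (\<phi> (act (SR_inv D eps sH S z) 1) * \<pi> h)"
      unfolding ract_def by (simp add: phi_mult mult.assoc)
    also have "\<dots> = \<phi> a * \<pi> (z * h)"
      by (simp add: phi_act_Hs_unit SR_inv_in_Hs[OF z] antipode_SR_inv[OF z])
    finally show ?thesis by simp
  qed
  ultimately have "sw (*) X (\<lambda>a h. l (\<phi> a * \<pi> h)) = sw (*) Y (\<lambda>a h. l (\<phi> a * \<pi> h))"
    using assms unfolding smash_eq_def by blast
  then show "l (sw sB X (\<lambda>a h. \<phi> a * \<pi> h)) = l (sw sB Y (\<lambda>a h. \<phi> a * \<pi> h))"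
    by (simp add: sw_linear_map[OF l])
qed

lemma psmash_hom_induced_hom: "psmash_hom sH D eps S sA act sB induced_hom"
  unfolding psmash_hom_def Let_def
  using induced_hom_smash_eq induced_hom_add induced_hom_sscale induced_hom_smult
    induced_hom_pstens[of 1 1]
  by (simp add: phi_one pi_one)

lemma psmash_hom_unique:
  assumes hom: "psmash_hom sH D eps S sA act sB \<Psi>"
    and on_H: "\<forall>h. \<Psi> (pstens D act 1 h) = \<pi> h"
    and on_A: "\<forall>a. \<Psi> (pstens D act a 1) = \<phi> a"
    and X: "X \<in> psmash sH D eps S sA act"
  shows "\<Psi> X = induced_hom X"
  using X
proof (induction X rule: psmash.induct)
  case (gen a h)
  let ?P = "psmash sH D eps S sA act"
  have "smult D act (pstens D act a 1) (pstens D act 1 h) \<in> ?P"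
    by (intro psmash.mult psmash.gen)
  then have "\<Psi> (pstens D act a h) = \<Psi> (smult D act (pstens D act a 1) (pstens D act 1 h))"
    using hom smash_eq_pstens_factor psmash.gen unfolding psmash_hom_def Let_def by metis
  also have "\<dots> = \<phi> a * \<pi> h"
    using hom on_H on_A psmash.gen unfolding psmash_hom_def Let_def by metis
  finally show ?case
    by (simp add: induced_hom_pstens)
next
  case (add X Y)
  then show ?case
    using hom unfolding psmash_hom_def Let_def by (simp add: induced_hom_add)
next
  case (scale X c)
  then show ?case
    using hom unfolding psmash_hom_def Let_def by (simp add: induced_hom_sscale)
next
  case (mult X Y)
  then show ?case
    using hom unfolding psmash_hom_def Let_def by (simp add: induced_hom_smult)
next
  case (eq X Y)
  then have "\<Psi> Y = \<Psi> X"
    using hom psmash.eq unfolding psmash_hom_def Let_def by blast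
  with eq show ?case
    by (simp add: induced_hom_smash_eq)
qed

end

theorem theorem3p14:
  fixes sH :: "'k::field \<Rightarrow> 'h::{ring,monoid_mult} \<Rightarrow> 'h"
    and D :: "'h \<Rightarrow> ('h \<times> 'h \<Rightarrow>\<^sub>0 'k)"
    and eps :: "'h \<Rightarrow> 'k"
    and S :: "'h \<Rightarrow> 'h"
    and sA :: "'k \<Rightarrow> 'a::{ring,monoid_mult} \<Rightarrow> 'a"
    and act :: "'h \<Rightarrow> 'a \<Rightarrow> 'a"
    and sB :: "'k \<Rightarrow> 'b::{ring,monoid_mult} \<Rightarrow> 'b"
    and \<pi> :: "'h \<Rightarrow> 'b"
    and \<phi> :: "'a \<Rightarrow> 'b"
  assumes "weak_hopf sH D eps S"
    and "symmetric_partial_module_algebra sH D sA act"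
    and "k_algebra sB"
    and "partial_rep sH D S sB \<pi>"
    and "alg_hom sA sB \<phi>"
    and "covariant_pair sH D S sA act sB \<phi> \<pi>"
  shows "\<exists>\<Phi>. (psmash_hom sH D eps S sA act sB \<Phi> \<and>
              (\<forall>h. \<Phi> (pstens D act 1 h) = \<pi> h) \<and>
              (\<forall>a. \<Phi> (pstens D act a 1) = \<phi> a)) \<and>
            (\<forall>\<Psi>. psmash_hom sH D eps S sA act sB \<Psi> \<and>
                  (\<forall>h. \<Psi> (pstens D act 1 h) = \<pi> h) \<and>
                  (\<forall>a. \<Psi> (pstens D act a 1) = \<phi> a) \<longrightarrow>
                  (\<forall>X\<in>psmash sH D eps S sA act. \<Psi> X = \<Phi> X))"
proof -
  have "partial_module_algebra sH D sA act"
    using assms(2) unfolding symmetric_partial_module_algebra_def by blast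
  then interpret weak_hopf_covariant_pair sH D eps S sA act sB \<phi> \<pi>
    using assms(1,3,6) by unfold_locales
  show ?thesis
  proof (intro exI conjI allI impI ballI)
    show "psmash_hom sH D eps S sA act sB induced_hom"
      by (rule psmash_hom_induced_hom)
    show "induced_hom (pstens D act 1 h) = \<pi> h" for h
      by (simp add: induced_hom_pstens phi_one)
    show "induced_hom (pstens D act a 1) = \<phi> a" for a
      by (simp add: induced_hom_pstens pi_one)
    show "\<Psi> X = induced_hom X"
      if "psmash_hom sH D eps S sA act sB \<Psi> \<and> (\<forall>h. \<Psi> (pstens D act 1 h) = \<pi> h) \<and>
          (\<forall>a. \<Psi> (pstens D act a 1) = \<phi> a)"
        and "X \<in> psmash sH D eps S sA act" for \<Psi> X
      using psmash_hom_unique that by blast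
  qed
qed

end
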